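(* For integer $n\ge1$ and real $1\le x\le n$ define $$A_0(n,x)=n^2\left[\left(\tfrac32-\gamma\right)+\left(H_{\lfloor n/x\rfloor}-\log\frac nx\right)+\frac12\frac{x^2}{n^2}\left\lfloor\frac nx\right\rfloor^2+\frac12\frac{x^2}{n^2}\left\lfloor\frac nx\right\rfloor-2\frac xn\left\lfloor\frac nx\right\rfloor\right]$$ and $$B_0(n,x)=n^2\left[(1-\gamma)+\left(H_{\lfloor n/x\rfloor}-\log\frac nx\right)-\left\lfloor\frac nx\right\rfloor\frac xn\right].$$ Then, uniformly for $n\ge1$ and $1\le x\le n$: (1) $A_0(n,x)=nx+O(x^2)$; (2) $B_0(n,x)=\frac12 nx+O(x^2)$.
   Context: $H_m=\sum_{k=1}^m\frac1k$ and $\gamma$ is Euler's constant. *)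

theory Defs
  imports "HOL-Analysis.Analysis"
begin

definition A0 :: "nat \<Rightarrow> real \<Rightarrow> real" where
  "A0 n x = (let m = nat \<lfloor>real n / x\<rfloor> in
     (real n)^2 * ((3/2 - euler_mascheroni) + (harm m - ln (real n / x))
       + 1/2 * x^2 / (real n)^2 * (real m)^2 + 1/2 * x^2 / (real n)^2 * real m
       - 2 * x / real n * real m))"

definition B0 :: "nat \<Rightarrow> real \<Rightarrow> real" where
  "B0 n x = (let m = nat \<lfloor>real n / x\<rfloor> in
     (real n)^2 * ((1 - euler_mascheroni) + (harm m - ln (real n / x))
       - real m * x / real n))"

end

theory Submission
  imports Defs
begin

text \<open>
  With \<open>t = n / x \<ge> 1\<close> and \<open>m = \<lfloor>t\<rfloor>\<close>, the quantity \<open>B\<^sub>0(n,x) - n x / 2\<close> is \<open>n\<^sup>2\<close> times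
  \<open>H\<^sub>m - \<gamma> - ln t - ((m + 1/2) / t - 1)\<close>. Splitting \<open>ln t = ln (m + 1) - ln (1 + z)\<close> with
  \<open>0 \<le> z = (m + 1 - t) / t \<le> 1 / t\<close>, the Euler--Mascheroni bounds
  \<open>H\<^sub>m - \<gamma> - ln (m + 1) \<in> [-1/(2m), -1/(2(m+1))]\<close> and \<open>ln (1 + z) = z + O(z\<^sup>2)\<close> show that this
  is \<open>O(1/t\<^sup>2)\<close>, i.e. \<open>B\<^sub>0(n,x) - n x / 2 = O(x\<^sup>2)\<close>. Moreover \<open>A\<^sub>0(n,x) - B\<^sub>0(n,x) - n x / 2\<close> is
  exactly \<open>r (r - x) / 2\<close> for the remainder \<open>r = n - m x \<in> [0, x)\<close>, which is also \<open>O(x\<^sup>2)\<close>.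
\<close>

lemma harm_minus_ln_Suc_bounds:
  assumes "m \<ge> 1"
  shows "- 1 / (2 * real m) \<le> harm m - euler_mascheroni - ln (real m + 1)"
    and "harm m - euler_mascheroni - ln (real m + 1) \<le> - 1 / (2 * (real m + 1))"
  using euler_mascheroni_bounds[OF assms] by (auto simp: inverse_eq_divide add.commute)

lemma abs_half_inverse_diff_le:
  fixes t a :: real
  assumes "0 < t" "t \<le> 2 * a" "\<bar>t - a\<bar> \<le> 1"
  shows "\<bar>1 / (2 * t) - 1 / (2 * a)\<bar> \<le> 1 / t^2"
proof -
  have a: "0 < a" using assms by linarith
  have "\<bar>1 / (2 * t) - 1 / (2 * a)\<bar> = \<bar>t - a\<bar> / (2 * t * a)"
    using assms a by (simp add: divide_simps abs_minus_commute)
  also have "\<dots> \<le> 1 / (2 * t * a)"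
    using assms a by (intro divide_right_mono) auto
  also have "\<dots> \<le> 1 / t^2"
    using assms a by (intro divide_left_mono) (auto simp: power2_eq_square)
  finally show ?thesis .
qed

lemma harm_floor_minus_ln:
  fixes t :: real
  assumes "1 \<le> t"
  shows "\<bar>harm (nat \<lfloor>t\<rfloor>) - euler_mascheroni - ln t - ((real (nat \<lfloor>t\<rfloor>) + 1/2) / t - 1)\<bar>
           \<le> 2 / t^2"
proof -
  define m where "m = nat \<lfloor>t\<rfloor>"
  have m: "1 \<le> m" "real m \<le> t" "t < real m + 1"
    using assms unfolding m_def by linarith+
  have t: "0 < t" using assms by simp
  define z where "z = (real m + 1 - t) / t"
  have z: "0 \<le> z" "z \<le> 1 / t"
    using m t unfolding z_def by (auto simp: divide_right_mono)
  have ln_split: "ln (real m + 1) - ln t = ln (1 + z)"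
  proof -
    have "1 + z = (real m + 1) / t"
      using t unfolding z_def by (simp add: field_simps)
    then show ?thesis
      using m t by (simp add: ln_div)
  qed
  have "1 / t \<le> 1" using assms by simp
  then have ln_z: "z - z^2 \<le> ln (1 + z)" "ln (1 + z) \<le> z"
    using z by (auto intro: ln_one_plus_pos_lower_bound ln_add_one_self_le_self)
  have "z^2 \<le> (1 / t)^2"
    using z by (intro power_mono) auto
  then have z2: "z^2 \<le> 1 / t^2"
    by (simp add: power_divide)
  have lower: "\<bar>1 / (2 * t) - 1 / (2 * real m)\<bar> \<le> 1 / t^2"
    using t m by (intro abs_half_inverse_diff_le) auto
  have upper: "\<bar>1 / (2 * t) - 1 / (2 * (real m + 1))\<bar> \<le> 1 / t^2"
    using t m by (intro abs_half_inverse_diff_le) auto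
  have "(real m + 1/2) / t - 1 = z - 1 / (2 * t)"
    using t unfolding z_def by (simp add: field_simps)
  then show ?thesis
    using harm_minus_ln_Suc_bounds[OF m(1)] ln_split ln_z z2 upper lower
    unfolding m_def [symmetric] by (simp add: abs_le_iff)
qed

lemma B0_minus_half_eq:
  "B0 n x - 1/2 * real n * x = (real n)^2 * (harm (nat \<lfloor>real n / x\<rfloor>) - euler_mascheroni
     - ln (real n / x) - ((real (nat \<lfloor>real n / x\<rfloor>) + 1/2) / (real n / x) - 1))"
  unfolding B0_def Let_def by (cases "n = 0") (simp_all add: field_simps power2_eq_square)

lemma A0_eq_B0_plus:
  fixes n :: nat and x :: real
  defines "m \<equiv> nat \<lfloor>real n / x\<rfloor>"
  shows "A0 n x = B0 n x + 1/2 * real n * x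
           + 1/2 * (real n - real m * x) * (real n - real m * x - x)"
  unfolding A0_def B0_def Let_def m_def [symmetric]
  by (cases "n = 0") (simp_all add: m_def field_simps power2_eq_square)

lemma B0_minus_half_bound:
  assumes "0 < x" "x \<le> real n"
  shows "\<bar>B0 n x - 1/2 * real n * x\<bar> \<le> 2 * x^2"
proof -
  define t where "t = real n / x"
  have "1 \<le> t" "0 < real n"
    using assms unfolding t_def by auto
  have "\<bar>B0 n x - 1/2 * real n * x\<bar> = (real n)^2 *
          \<bar>harm (nat \<lfloor>t\<rfloor>) - euler_mascheroni - ln t - ((real (nat \<lfloor>t\<rfloor>) + 1/2) / t - 1)\<bar>"
    unfolding B0_minus_half_eq t_def by (simp add: abs_mult)
  also have "\<dots> \<le> (real n)^2 * (2 / t^2)"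
    using harm_floor_minus_ln [OF \<open>1 \<le> t\<close>] by (intro mult_left_mono) auto
  also have "\<dots> = 2 * x^2"
    using assms \<open>0 < real n\<close> unfolding t_def by (simp add: field_simps)
  finally show ?thesis .
qed

lemma A0_minus_B0_bound:
  assumes "0 < x"
  shows "\<bar>(A0 n x - real n * x) - (B0 n x - 1/2 * real n * x)\<bar> \<le> x^2 / 2"
proof -
  define m where "m = nat \<lfloor>real n / x\<rfloor>"
  define r where "r = real n - real m * x"
  have "real m = of_int \<lfloor>real n / x\<rfloor>"
    using assms unfolding m_def by simp
  then have "real m \<le> real n / x" "real n / x < real m + 1"
    by linarith+
  then have r: "0 \<le> r" "r \<le> x"
    using assms unfolding r_def by (simp_all add: field_simps)
  have "(A0 n x - real n * x) - (B0 n x - 1/2 * real n * x) = - (r * (x - r) / 2)"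
    unfolding A0_eq_B0_plus m_def [symmetric] r_def [symmetric] by (simp add: field_simps)
  moreover have "0 \<le> r * (x - r)"
    using r by simp
  ultimately have "\<bar>(A0 n x - real n * x) - (B0 n x - 1/2 * real n * x)\<bar> = r * (x - r) / 2"
    by simp
  also have "\<dots> \<le> x * x / 2"
    using r by (intro divide_right_mono mult_mono) auto
  finally show ?thesis
    by (simp add: power2_eq_square)
qed

theorem theorem3p7:
  shows "(\<exists>C. \<forall>n::nat. \<forall>x::real. 1 \<le> n \<and> 1 \<le> x \<and> x \<le> real n \<longrightarrow>
            \<bar>A0 n x - real n * x\<bar> \<le> C * x^2)
       \<and> (\<exists>C. \<forall>n::nat. \<forall>x::real. 1 \<le> n \<and> 1 \<le> x \<and> x \<le> real n \<longrightarrow>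
            \<bar>B0 n x - 1/2 * real n * x\<bar> \<le> C * x^2)"
proof (intro conjI exI allI impI)
  fix n :: nat and x :: real
  assume "1 \<le> n \<and> 1 \<le> x \<and> x \<le> real n"
  then have x: "0 < x" "x \<le> real n" by auto
  show "\<bar>B0 n x - 1/2 * real n * x\<bar> \<le> 2 * x^2"
    using B0_minus_half_bound [OF x] .
  show "\<bar>A0 n x - real n * x\<bar> \<le> 3 * x^2"
    using B0_minus_half_bound [OF x] A0_minus_B0_bound [OF x(1), of n] by linarith
qed

end
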